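(* Let $w\in W$ be a strong minuscule element, and let $w=s_{i_1}\cdots s_{i_r}$ be any reduced expression of $w$. Then for every $i\in I$ we have $\#\{1\le p\le r \mid i_p=i\}\ge 1$; that is, every simple reflection $s_1,\dots,s_n$ appears at least once in every reduced expression of $w$.
   Context: Let $\mathfrak g$ be a finite-dimensional simple Lie algebra over $\mathbb C$ of type $\mathrm A_n$, $\mathrm B_n$, $\mathrm C_n$ or $\mathrm D_n$, with index set $I=\{1,\dots,n\}$, Cartan subalgebra $\mathfrak h$, pairing $\langle\cdot,\cdot\rangle:\mathfrak h^*\times\mathfrak h\to\mathbb C$, simple roots $\alpha_i$, simple coroots $\alpha_i^\vee$, fundamental weights $\Lambda_i$, integral weights $P=\bigoplus_{i\in I}\mathbb Z\Lambda_i$, dominant integral weights $P^+=\sum_{i\in I}\mathbb Z_{\ge0}\Lambda_i$, and Weyl group $W$ generated by the simple reflections $s_i$ in $\alpha_i$. For $\Lambda\in P$, an element $w\in W$ is called $\Lambda$-minuscule if there is a reduced expression $w=s_{i_1}\cdots s_{i_r}$ such that $\langle s_{i_{p+1}}\cdots s_{i_r}(\Lambda),\alpha_{i_p}^\vee\rangle=1$ for all $1\le p\le r$. An element $w$ is dominant minuscule if it is $\Lambda$-minuscule for some $\Lambda\in P^+$. A dominant minuscule element $w$ is called strong minuscule if there exists a unique $\Lambda\in P^+$ such that $w$ is $\Lambda$-minuscule. *)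

theory Defs
  imports Main
begin

text \<open>Weights in P are encoded by their coordinates in the basis of
fundamental weights: a weight is a function lam :: nat => int with lam k = 0 for k outside
I = {1..n}; then lam i is the pairing of lam with the simple coroot alpha_i^vee.\<close>

datatype ctype = TA | TB | TC | TD

definition valid_type :: "ctype \<Rightarrow> nat \<Rightarrow> bool" where
  "valid_type t n \<longleftrightarrow> (case t of TA \<Rightarrow> n \<ge> 1 | TB \<Rightarrow> n \<ge> 2 | TC \<Rightarrow> n \<ge> 3 | TD \<Rightarrow> n \<ge> 4)"

text \<open>Cartan matrix a_ij = pairing of alpha_j with alpha_i^vee (Kac's convention, Bourbaki labelling).\<close>
definition cartan :: "ctype \<Rightarrow> nat \<Rightarrow> nat \<Rightarrow> nat \<Rightarrow> int" where
  "cartan t n i j =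
    (if i \<notin> {1..n} \<or> j \<notin> {1..n} then 0
     else if i = j then 2
     else (case t of
        TA \<Rightarrow> (if i + 1 = j \<or> j + 1 = i then -1 else 0)
      | TB \<Rightarrow> (if i = n \<and> j = n - 1 then -2
               else if i + 1 = j \<or> j + 1 = i then -1 else 0)
      | TC \<Rightarrow> (if i = n - 1 \<and> j = n then -2
               else if i + 1 = j \<or> j + 1 = i then -1 else 0)
      | TD \<Rightarrow> (if (i = n \<and> j = n - 2) \<or> (i = n - 2 \<and> j = n) then -1
               else if i = n \<or> j = n then 0
               else if i + 1 = j \<or> j + 1 = i then -1 else 0)))"

text \<open>Simple reflection: s_i(lam) = lam - <lam, alpha_i^vee> alpha_i, where alpha_i has
fundamental-weight coordinates (a_ki)_k.\<close>
definition sref :: "ctype \<Rightarrow> nat \<Rightarrow> nat \<Rightarrow> (nat \<Rightarrow> int) \<Rightarrow> (nat \<Rightarrow> int)" where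
  "sref t n i lam = (\<lambda>k. lam k - lam i * cartan t n k i)"

definition word_act :: "ctype \<Rightarrow> nat \<Rightarrow> nat list \<Rightarrow> (nat \<Rightarrow> int) \<Rightarrow> (nat \<Rightarrow> int)" where
  "word_act t n ws = foldr (\<lambda>i f. sref t n i \<circ> f) ws id"

definition weyl_group :: "ctype \<Rightarrow> nat \<Rightarrow> ((nat \<Rightarrow> int) \<Rightarrow> (nat \<Rightarrow> int)) set" where
  "weyl_group t n = {word_act t n ws | ws. set ws \<subseteq> {1..n}}"

definition reduced_expr :: "ctype \<Rightarrow> nat \<Rightarrow> ((nat \<Rightarrow> int) \<Rightarrow> (nat \<Rightarrow> int)) \<Rightarrow> nat list \<Rightarrow> bool" where
  "reduced_expr t n w ws \<longleftrightarrow> set ws \<subseteq> {1..n} \<and> word_act t n ws = w \<and>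
     (\<forall>vs. set vs \<subseteq> {1..n} \<and> word_act t n vs = w \<longrightarrow> length ws \<le> length vs)"

definition weight :: "nat \<Rightarrow> (nat \<Rightarrow> int) \<Rightarrow> bool" where
  "weight n lam \<longleftrightarrow> (\<forall>k. k \<notin> {1..n} \<longrightarrow> lam k = 0)"

definition dominant :: "nat \<Rightarrow> (nat \<Rightarrow> int) \<Rightarrow> bool" where
  "dominant n lam \<longleftrightarrow> weight n lam \<and> (\<forall>i\<in>{1..n}. lam i \<ge> 0)"

text \<open>w is Lam-minuscule (0-indexed positions: ws!p = i_{p+1}).\<close>
definition minuscule :: "ctype \<Rightarrow> nat \<Rightarrow> (nat \<Rightarrow> int) \<Rightarrow> ((nat \<Rightarrow> int) \<Rightarrow> (nat \<Rightarrow> int)) \<Rightarrow> bool" where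
  "minuscule t n lam w \<longleftrightarrow> (\<exists>ws. reduced_expr t n w ws \<and>
     (\<forall>p < length ws. word_act t n (drop (Suc p) ws) lam (ws ! p) = 1))"

definition dominant_minuscule :: "ctype \<Rightarrow> nat \<Rightarrow> ((nat \<Rightarrow> int) \<Rightarrow> (nat \<Rightarrow> int)) \<Rightarrow> bool" where
  "dominant_minuscule t n w \<longleftrightarrow> (\<exists>lam. dominant n lam \<and> minuscule t n lam w)"

definition strong_minuscule :: "ctype \<Rightarrow> nat \<Rightarrow> ((nat \<Rightarrow> int) \<Rightarrow> (nat \<Rightarrow> int)) \<Rightarrow> bool" where
  "strong_minuscule t n w \<longleftrightarrow> dominant_minuscule t n w \<and>
     (\<exists>!lam. dominant n lam \<and> minuscule t n lam w)"

end

(*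
  Let lam be the unique dominant weight for which w is lam-minuscule, realised along a reduced
  word vs. Along a lam-minuscule word every reflection subtracts exactly one simple root, so
  lam - w lam = sum_j #{p. vs_p = j} alpha_j, whereas for an arbitrary word ws for w the
  difference lam - w lam is a combination of the alpha_j with j occurring in ws. The simple
  roots are linearly independent, hence every letter of vs occurs in ws. If i did not occur
  in ws, the reflections along vs would all fix Lambda_i, so w would also be
  (lam + Lambda_i)-minuscule, contradicting the uniqueness of lam.
*)

theory Submission
  imports Defs
begin

(* The weight sum_j c_j alpha_j: in fundamental-weight coordinates alpha_j is column j
   of the Cartan matrix. *)
definition root_comb :: "ctype \<Rightarrow> nat \<Rightarrow> (nat \<Rightarrow> int) \<Rightarrow> nat \<Rightarrow> int" where
  "root_comb t n c = (\<lambda>k. \<Sum>j\<in>{1..n}. c j * cartan t n k j)"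

lemma root_comb_eq_sum_support:
  assumes "finite S" and "\<And>j. j \<in> {1..n} \<Longrightarrow> j \<notin> S \<Longrightarrow> cartan t n k j = 0"
  shows "root_comb t n c k = (\<Sum>j\<in>S. c j * cartan t n k j)"
proof -
  have "root_comb t n c k = (\<Sum>j\<in>S \<union> {1..n}. c j * cartan t n k j)"
    unfolding root_comb_def using assms(1) by (intro sum.mono_neutral_left) (auto simp: cartan_def)
  also have "\<dots> = (\<Sum>j\<in>S. c j * cartan t n k j)"
    using assms by (intro sum.mono_neutral_right) auto
  finally show ?thesis .
qed

lemma root_comb_chain_row:
  assumes "\<forall>j. j \<notin> {1..n} \<longrightarrow> c j = 0" and "1 \<le> k"
    and "t = TA \<and> k \<le> n \<or> t = TB \<and> k < n \<or> t = TC \<and> k + 1 < n \<or> t = TD \<and> k + 2 < n"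
  shows "root_comb t n c k = 2 * c k - c (k - 1) - c (k + 1)"
proof -
  obtain l where l: "k = Suc l" using assms(2) by (cases k) auto
  show ?thesis using assms unfolding l
    by (subst root_comb_eq_sum_support[of "{l, Suc l, Suc (Suc l)}"]) (auto simp: cartan_def)
qed

lemma int_seq_linear_if_second_differences_vanish:
  fixes c :: "nat \<Rightarrow> int"
  assumes "c 0 = 0" and "\<And>k. 1 \<le> k \<Longrightarrow> k \<le> m \<Longrightarrow> c (k + 1) = 2 * c k - c (k - 1)"
  shows "k \<le> m + 1 \<Longrightarrow> c k = int k * c 1"
proof (induction k rule: less_induct)
  case (less k)
  show ?case
  proof (cases "k \<le> 1")
    case True
    then show ?thesis using assms(1) by (cases k) auto
  next
    case False
    then obtain j where j: "k = j + 2" by (intro that[of "k - 2"]) simp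
    then have "c k = 2 * c (j + 1) - c j" using assms(2)[of "j + 1"] less.prems by simp
    also have "\<dots> = int k * c 1"
      using less.IH[of j] less.IH[of "j + 1"] less.prems j by (simp add: algebra_simps)
    finally show ?thesis .
  qed
qed

lemma root_comb_kernel_linear_on_chain:
  assumes supp: "\<forall>j. j \<notin> {1..n} \<longrightarrow> c j = 0" and ker: "\<forall>k\<in>{1..n}. root_comb t n c k = 0"
    and chain: "t = TA \<and> m = n \<or> t = TB \<and> m + 1 = n \<or> t = TC \<and> m + 2 = n \<or> t = TD \<and> m + 3 = n"
    and "k \<le> m + 1"
  shows "c k = int k * c 1"
proof (rule int_seq_linear_if_second_differences_vanish[of c m])
  show "c 0 = 0" using supp by simp
  fix k assume "1 \<le> k" "k \<le> m"
  then have "root_comb t n c k = 2 * c k - c (k - 1) - c (k + 1)"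
    using chain by (intro root_comb_chain_row[OF supp]) auto
  moreover have "root_comb t n c k = 0" using ker \<open>1 \<le> k\<close> \<open>k \<le> m\<close> chain by auto
  ultimately show "c (k + 1) = 2 * c k - c (k - 1)" by simp
qed (fact assms)

(* A kernel vector grows linearly along the type A chain, c k = k * c 1; the remaining rows
   at the end of the diagram then force c 1 = 0. *)
lemma root_comb_kernel_trivial:
  assumes "valid_type t n" and supp: "\<forall>j. j \<notin> {1..n} \<longrightarrow> c j = 0"
    and ker: "\<forall>k\<in>{1..n}. root_comb t n c k = 0"
  shows "c = (\<lambda>_. 0)"
proof -
  have "\<forall>k\<in>{1..n}. c k = 0"
  proof (cases t)
    case TA
    have lin: "c k = int k * c 1" if "k \<le> n + 1" for k
      by (rule root_comb_kernel_linear_on_chain[OF supp ker, of n]) (use TA that in auto)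
    have "c 1 = 0" using lin[of "n + 1"] supp by simp
    then show ?thesis using lin by (metis atLeastAtMost_iff le_SucI mult_zero_right Suc_eq_plus1)
  next
    case TB
    then obtain m where n: "n = m + 2" using assms(1) by (auto simp: valid_type_def dest: le_Suc_ex)
    have lin: "c k = int k * c 1" if "k \<le> m + 2" for k
      by (rule root_comb_kernel_linear_on_chain[OF supp ker, of "m + 1"]) (use TB n that in auto)
    have "root_comb t n c (m + 2) = 2 * c (m + 2) - 2 * c (m + 1)"
      using TB n by (subst root_comb_eq_sum_support[of "{m + 1, m + 2}"]) (auto simp: cartan_def)
    then have "c 1 = 0" using ker lin[of "m + 1"] lin[of "m + 2"] n by (simp add: algebra_simps)
    then show ?thesis using lin n by (metis atLeastAtMost_iff mult_zero_right)
  next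
    case TC
    then obtain m where n: "n = m + 3" using assms(1) by (auto simp: valid_type_def dest: le_Suc_ex)
    have lin: "c k = int k * c 1" if "k \<le> m + 2" for k
      by (rule root_comb_kernel_linear_on_chain[OF supp ker, of "m + 1"]) (use TC n that in auto)
    have "root_comb t n c (m + 3) = 2 * c (m + 3) - c (m + 2)"
      using TC n by (subst root_comb_eq_sum_support[of "{m + 2, m + 3}"]) (auto simp: cartan_def)
    moreover have "root_comb t n c (m + 2) = 2 * c (m + 2) - c (m + 1) - 2 * c (m + 3)"
      using TC n by (subst root_comb_eq_sum_support[of "{m + 1, m + 2, m + 3}"])
        (auto simp: cartan_def)
    ultimately have "c 1 = 0" "2 * c (m + 3) = c (m + 2)"
      using ker lin[of "m + 1"] lin[of "m + 2"] n by (simp_all add: algebra_simps)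
    moreover have "c k = 0" if "k \<le> m + 2" for k using lin[OF that] \<open>c 1 = 0\<close> by simp
    moreover have "k \<le> m + 2 \<or> k = m + 3" if "k \<in> {1..n}" for k using that n by auto
    ultimately show ?thesis by fastforce
  next
    case TD
    then obtain m where n: "n = m + 4" using assms(1) by (auto simp: valid_type_def dest: le_Suc_ex)
    have lin: "c k = int k * c 1" if "k \<le> m + 2" for k
      by (rule root_comb_kernel_linear_on_chain[OF supp ker, of "m + 1"]) (use TD n that in auto)
    have "root_comb t n c (m + 4) = 2 * c (m + 4) - c (m + 2)"
      using TD n by (subst root_comb_eq_sum_support[of "{m + 2, m + 4}"]) (auto simp: cartan_def)
    moreover have "root_comb t n c (m + 3) = 2 * c (m + 3) - c (m + 2)"
      using TD n by (subst root_comb_eq_sum_support[of "{m + 2, m + 3}"]) (auto simp: cartan_def)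
    moreover have "root_comb t n c (m + 2) = 2 * c (m + 2) - c (m + 1) - c (m + 3) - c (m + 4)"
      using TD n by (subst root_comb_eq_sum_support[of "{m + 1, m + 2, m + 3, m + 4}"])
        (auto simp: cartan_def)
    ultimately have "c 1 = 0" "2 * c (m + 4) = c (m + 2)" "2 * c (m + 3) = c (m + 2)"
      using ker lin[of "m + 1"] lin[of "m + 2"] n by (simp_all add: algebra_simps)
    moreover have "c k = 0" if "k \<le> m + 2" for k using lin[OF that] \<open>c 1 = 0\<close> by simp
    moreover have "k \<le> m + 2 \<or> k = m + 3 \<or> k = m + 4" if "k \<in> {1..n}" for k using that n by auto
    ultimately show ?thesis by fastforce
  qed
  with supp show ?thesis by fastforce
qed

lemma root_comb_diff: "root_comb t n (\<lambda>j. a j - b j) k = root_comb t n a k - root_comb t n b k"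
  unfolding root_comb_def by (simp add: left_diff_distrib sum_subtractf)

lemma root_comb_add_coeff:
  assumes "i \<in> {1..n}"
  shows "root_comb t n (\<lambda>j. c j + (if j = i then a else 0)) k
    = root_comb t n c k + a * cartan t n k i"
proof -
  have "(\<Sum>j\<in>{1..n}. (c j + (if j = i then a else 0)) * cartan t n k j)
      = (\<Sum>j\<in>{1..n}. c j * cartan t n k j + (if j = i then a * cartan t n k i else 0))"
    by (intro sum.cong) (auto simp: distrib_right)
  then show ?thesis using assms by (simp add: root_comb_def sum.distrib)
qed

lemma word_act_Nil [simp]: "word_act t n [] = id"
  by (simp add: word_act_def)

lemma word_act_Cons [simp]: "word_act t n (i # ws) = sref t n i \<circ> word_act t n ws"
  by (simp add: word_act_def)

lemma word_act_eq_sub_root_comb: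
  assumes "set ws \<subseteq> {1..n}"
  obtains c where "word_act t n ws lam = (\<lambda>k. lam k - root_comb t n c k)"
    and "\<forall>j. j \<notin> set ws \<longrightarrow> c j = 0"
  using assms
proof (induction ws arbitrary: thesis)
  case Nil
  show ?case by (rule Nil.prems(1)[of "\<lambda>_. 0"]) (auto simp: root_comb_def)
next
  case (Cons i ws)
  obtain c where c: "word_act t n ws lam = (\<lambda>k. lam k - root_comb t n c k)"
    and supp: "\<forall>j. j \<notin> set ws \<longrightarrow> c j = 0"
    using Cons.IH Cons.prems(2) by auto
  have i: "i \<in> {1..n}" using Cons.prems(2) by simp
  define a where "a = lam i - root_comb t n c i"
  show ?case
  proof (rule Cons.prems(1)[of "\<lambda>j. c j + (if j = i then a else 0)"])
    show "word_act t n (i # ws) lam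
        = (\<lambda>k. lam k - root_comb t n (\<lambda>j. c j + (if j = i then a else 0)) k)"
      unfolding root_comb_add_coeff[OF i] by (simp add: c sref_def a_def algebra_simps)
    show "\<forall>j. j \<notin> set (i # ws) \<longrightarrow> c j + (if j = i then a else 0) = 0" using supp by simp
  qed
qed

definition minuscule_word :: "ctype \<Rightarrow> nat \<Rightarrow> (nat \<Rightarrow> int) \<Rightarrow> nat list \<Rightarrow> bool" where
  "minuscule_word t n lam ws \<longleftrightarrow> (\<forall>p < length ws. word_act t n (drop (Suc p) ws) lam (ws ! p) = 1)"

lemma minuscule_word_Nil [simp]: "minuscule_word t n lam []"
  by (simp add: minuscule_word_def)

lemma minuscule_word_Cons [simp]:
  "minuscule_word t n lam (i # ws) \<longleftrightarrow> word_act t n ws lam i = 1 \<and> minuscule_word t n lam ws"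
  by (auto simp: minuscule_word_def less_Suc_eq_0_disj)

lemma minuscule_word_act:
  assumes "set ws \<subseteq> {1..n}" and "minuscule_word t n lam ws"
  shows "word_act t n ws lam = (\<lambda>k. lam k - root_comb t n (\<lambda>j. int (count_list ws j)) k)"
  using assms
proof (induction ws)
  case Nil
  show ?case by (simp add: root_comb_def)
next
  case (Cons i ws)
  have i: "i \<in> {1..n}" using Cons.prems(1) by simp
  have "(\<lambda>j. int (count_list (i # ws) j))
      = (\<lambda>j. int (count_list ws j) + (if j = i then 1 else 0))"
    by auto
  then show ?case
    using Cons by (simp add: sref_def root_comb_add_coeff[OF i] algebra_simps)
qed

lemma minuscule_word_letters_subset:
  assumes "valid_type t n" and ws: "set ws \<subseteq> {1..n}" and vs: "set vs \<subseteq> {1..n}"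
    and eq: "word_act t n ws lam = word_act t n vs lam" and "minuscule_word t n lam vs"
  shows "set vs \<subseteq> set ws"
proof
  fix i assume "i \<in> set vs"
  obtain c where c: "word_act t n ws lam = (\<lambda>k. lam k - root_comb t n c k)"
    and supp: "\<forall>j. j \<notin> set ws \<longrightarrow> c j = 0"
    using word_act_eq_sub_root_comb[OF ws] by blast
  define d where "d = (\<lambda>j. int (count_list vs j) - c j)"
  have "d = (\<lambda>_. 0)"
  proof (rule root_comb_kernel_trivial[OF \<open>valid_type t n\<close>])
    show "\<forall>j. j \<notin> {1..n} \<longrightarrow> d j = 0"
    proof (intro allI impI)
      fix j assume "j \<notin> {1..n}"
      then have "j \<notin> set vs" "j \<notin> set ws" using ws vs by auto
      then show "d j = 0" using supp by (simp add: d_def)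
    qed
    show "\<forall>k\<in>{1..n}. root_comb t n d k = 0"
      using eq unfolding c minuscule_word_act[OF vs \<open>minuscule_word t n lam vs\<close>] d_def
      by (simp add: root_comb_diff fun_eq_iff)
  qed
  then have "c i = int (count_list vs i)" by (simp add: d_def fun_eq_iff)
  with \<open>i \<in> set vs\<close> supp show "i \<in> set ws" by (auto simp: count_list_0_iff)
qed

definition fund_weight :: "nat \<Rightarrow> nat \<Rightarrow> int" where
  "fund_weight i = (\<lambda>k. if k = i then 1 else 0)"

lemma word_act_add_fund_weight:
  assumes "i \<notin> set ws"
  shows "word_act t n ws (\<lambda>k. lam k + fund_weight i k)
    = (\<lambda>k. word_act t n ws lam k + fund_weight i k)"
  using assms by (induction ws) (auto simp: sref_def fund_weight_def algebra_simps)

lemma minuscule_word_add_fund_weight: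
  assumes "i \<notin> set ws" and "minuscule_word t n lam ws"
  shows "minuscule_word t n (\<lambda>k. lam k + fund_weight i k) ws"
  using assms
proof (induction ws)
  case (Cons j ws)
  then show ?case by (simp add: word_act_add_fund_weight) (simp add: fund_weight_def)
qed simp

lemma dominant_add_fund_weight:
  assumes "dominant n lam" and "i \<in> {1..n}"
  shows "dominant n (\<lambda>k. lam k + fund_weight i k)"
  using assms by (auto simp: dominant_def weight_def fund_weight_def)

lemma minuscule_add_fund_weight:
  assumes "valid_type t n" and "minuscule t n lam w"
    and "set ws \<subseteq> {1..n}" and "word_act t n ws = w" and "i \<notin> set ws"
  shows "minuscule t n (\<lambda>k. lam k + fund_weight i k) w"
proof -
  obtain vs where vs: "reduced_expr t n w vs" and "minuscule_word t n lam vs"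
    using assms(2) by (auto simp: minuscule_def minuscule_word_def)
  then have "set vs \<subseteq> set ws"
    using assms(1,3,4) by (intro minuscule_word_letters_subset) (auto simp: reduced_expr_def)
  then have "minuscule_word t n (\<lambda>k. lam k + fund_weight i k) vs"
    using \<open>i \<notin> set ws\<close> \<open>minuscule_word t n lam vs\<close> by (blast intro: minuscule_word_add_fund_weight)
  with vs show ?thesis by (auto simp: minuscule_def minuscule_word_def)
qed

lemma one_le_card_positions_iff:
  "1 \<le> card {p. p < length ws \<and> ws ! p = i} \<longleftrightarrow> i \<in> set ws"
proof -
  have "finite {p. p < length ws \<and> ws ! p = i}" by simp
  then show ?thesis by (auto simp: Suc_le_eq card_gt_0_iff in_set_conv_nth)
qed

theorem proposition4p2:
  fixes t :: ctype and n :: nat and w :: "(nat \<Rightarrow> int) \<Rightarrow> (nat \<Rightarrow> int)" and ws :: "nat list"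
  assumes "valid_type t n"
    and "w \<in> weyl_group t n"
    and "strong_minuscule t n w"
    and "reduced_expr t n w ws"
  shows "\<forall>i\<in>{1..n}. card {p. p < length ws \<and> ws ! p = i} \<ge> 1"
proof
  fix i assume i: "i \<in> {1..n}"
  obtain lam where lam: "dominant n lam" "minuscule t n lam w"
    and unique: "\<And>lam'. dominant n lam' \<Longrightarrow> minuscule t n lam' w \<Longrightarrow> lam' = lam"
    using assms(3) by (auto simp: strong_minuscule_def)
  have "i \<in> set ws"
  proof (rule ccontr)
    assume "i \<notin> set ws"
    then have "minuscule t n (\<lambda>k. lam k + fund_weight i k) w"
      using assms(1,4) lam(2) by (intro minuscule_add_fund_weight) (auto simp: reduced_expr_def)
    with lam(1) i have "(\<lambda>k. lam k + fund_weight i k) = lam"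
      by (intro unique dominant_add_fund_weight)
    from this[THEN fun_cong, of i] show False by (simp add: fund_weight_def)
  qed
  then show "card {p. p < length ws \<and> ws ! p = i} \<ge> 1"
    by (rule one_le_card_positions_iff[THEN iffD2])
qed

end
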